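(* Let $0<\alpha<1$, $\sigma=1-\alpha/2$, $l,T>0$, $N,M\ge1$, $h=l/N$, $x_i=ih$, $\tau=T/M$, $t_j=j\tau$, $t_{j+\sigma}=(j+\sigma)\tau$. Let $k(t)\ge c_1>0$, $q(t)\ge0$ be continuous on $[0,T]$, $f$ continuous on $[0,l]\times[0,T]$, and $u_0$ a function on $[0,l]$. Set $a^{j+1}=k(t_{j+\sigma})$, $d^{j+1}=q(t_{j+\sigma})$, $\varphi_i^{j+1}=f(x_i,t_{j+\sigma})$ ($0\le i\le N$). Let $y$ solve $$\Delta^\alpha_{0t_{j+\sigma}}\mathcal H_hy_i=a^{j+1}y^{(\sigma)}_{\bar xx,i}-d^{j+1}\mathcal H_hy_i^{(\sigma)}+\mathcal H_h\varphi_i^{j+1},\quad i=1,\dots,N-1,\ j=0,\dots,M-1,$$ $$y_0^j=y_N^j=0,\qquad y_i^0=u_0(x_i).$$ Then the scheme is unconditionally stable and for every $j=0,\dots,M-1$ $$\|\mathcal H_hy^{j+1}\|_0^2\le\|\mathcal H_hy^0\|_0^2+\frac{l^2T^\alpha\Gamma(1-\alpha)}{c_1}\max_{1\le j\le M}\|\mathcal H_h\varphi^j\|_0^2 .$$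
   Context: $(y,v)=\sum_{i=1}^{N-1}y_iv_ih$, $\|y\|_0^2=(y,y)$; $v_{\bar xx,i}=(v_{i+1}-2v_i+v_{i-1})/h^2$; $\mathcal H_hv_i=v_i+\frac{h^2}{12}v_{\bar xx,i}=\frac{v_{i-1}+10v_i+v_{i+1}}{12}$ for $i=1,\dots,N-1$; $y^{(\sigma)}=\sigma y^{j+1}+(1-\sigma)y^j$. The discrete fractional derivative of a mesh function $w$ is $\Delta^\alpha_{0t_{j+\sigma}}w=\frac{\tau^{1-\alpha}}{\Gamma(2-\alpha)}\sum_{s=0}^{j}c_{j-s}\frac{w^{s+1}-w^s}{\tau}$, with $a_0=\sigma^{1-\alpha}$, $a_m=(m+\sigma)^{1-\alpha}-(m-1+\sigma)^{1-\alpha}$ ($m\ge1$), $b_m=\frac{1}{2-\alpha}[(m+\sigma)^{2-\alpha}-(m-1+\sigma)^{2-\alpha}]-\frac12[(m+\sigma)^{1-\alpha}+(m-1+\sigma)^{1-\alpha}]$ ($m\ge1$); for $j=0$, $c_0=a_0$; for $j\ge1$, $c_0=a_0+b_1$, $c_s=a_s+b_{s+1}-b_s$ ($1\le s\le j-1$), $c_j=a_j-b_j$. *)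

theory Defs
  imports "HOL-Analysis.Analysis"
begin

text \<open>Mesh functions in space are maps nat \<Rightarrow> real (index i = 0..N);
  time-dependent mesh functions are maps nat \<Rightarrow> nat \<Rightarrow> real, indexed first by
  the time level j and then by the space index i.\<close>

definition dinner :: "real \<Rightarrow> nat \<Rightarrow> (nat \<Rightarrow> real) \<Rightarrow> (nat \<Rightarrow> real) \<Rightarrow> real" where
  "dinner h N y v = (\<Sum>i = 1..N - 1. y i * v i * h)"

definition norm0sq :: "real \<Rightarrow> nat \<Rightarrow> (nat \<Rightarrow> real) \<Rightarrow> real" where
  "norm0sq h N y = dinner h N y y"

definition dxx :: "real \<Rightarrow> (nat \<Rightarrow> real) \<Rightarrow> nat \<Rightarrow> real" where
  "dxx h v i = (v (i + 1) - 2 * v i + v (i - 1)) / h ^ 2"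

text \<open>Only used for i \<ge> 1.\<close>
definition Hh :: "real \<Rightarrow> (nat \<Rightarrow> real) \<Rightarrow> nat \<Rightarrow> real" where
  "Hh h v i = v i + h ^ 2 / 12 * dxx h v i"

definition coef_a :: "real \<Rightarrow> real \<Rightarrow> nat \<Rightarrow> real" where
  "coef_a \<alpha> \<sigma> m = (if m = 0 then \<sigma> powr (1 - \<alpha>)
     else (real m + \<sigma>) powr (1 - \<alpha>) - (real m - 1 + \<sigma>) powr (1 - \<alpha>))"

definition coef_b :: "real \<Rightarrow> real \<Rightarrow> nat \<Rightarrow> real" where
  "coef_b \<alpha> \<sigma> m = 1 / (2 - \<alpha>) * ((real m + \<sigma>) powr (2 - \<alpha>) - (real m - 1 + \<sigma>) powr (2 - \<alpha>))
     - 1 / 2 * ((real m + \<sigma>) powr (1 - \<alpha>) + (real m - 1 + \<sigma>) powr (1 - \<alpha>))"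

definition coef_c :: "real \<Rightarrow> real \<Rightarrow> nat \<Rightarrow> nat \<Rightarrow> real" where
  "coef_c \<alpha> \<sigma> j s =
     (if j = 0 then coef_a \<alpha> \<sigma> 0
      else if s = 0 then coef_a \<alpha> \<sigma> 0 + coef_b \<alpha> \<sigma> 1
      else if s < j then coef_a \<alpha> \<sigma> s + coef_b \<alpha> \<sigma> (s + 1) - coef_b \<alpha> \<sigma> s
      else coef_a \<alpha> \<sigma> j - coef_b \<alpha> \<sigma> j)"

text \<open>Discrete fractional derivative at t_{j+\<sigma>} of a time mesh function w.\<close>
definition frac_deriv :: "real \<Rightarrow> real \<Rightarrow> real \<Rightarrow> nat \<Rightarrow> (nat \<Rightarrow> real) \<Rightarrow> real" where
  "frac_deriv \<alpha> \<sigma> \<tau> j w =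
     \<tau> powr (1 - \<alpha>) / Gamma (2 - \<alpha>) *
       (\<Sum>s = 0..j. coef_c \<alpha> \<sigma> j (j - s) * (w (s + 1) - w s) / \<tau>)"

end

theory Submission
  imports Defs
begin

text \<open>
  The L2-1\<sigma> weights come from w(t) = t powr (1 - \<alpha>): a_m is an increment of w over a unit
  cell and b_m the error of the trapezoidal rule for the integral of w over that cell. Since w is
  concave and w' convex, elementary quadrature inequalities show that c_s decreases in s, that
  c_j \<ge> (1 - \<alpha>)/2 (j + \<sigma>) powr (- \<alpha>), and that \<sigma>^2 c_1 \<le> (1 - \<alpha>) c_0. For \<sigma> = 1 - \<alpha>/2 these
  are the hypotheses of Alikhanov's inequality v^(\<sigma>) \<Delta>v \<ge> \<Delta>(v^2) / 2 for the discrete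
  fractional derivative \<Delta>, applied to v = H_h y_i.

  Taking the inner product of the scheme with H_h y^(\<sigma>), summation by parts and a discrete
  Poincare inequality give (y_xx, H_h y) \<le> - 4/(3 l^2) \<parallel>H_h y\<parallel>^2, and Young's inequality
  absorbs the source. The resulting bound on \<Delta>\<parallel>H_h y\<parallel>^2 integrates in time because the
  weights decrease and the diagonal weight is at least (1 - \<alpha>)/2 (M - 1 + \<sigma>) powr (- \<alpha>).
\<close>

section \<open>Quadrature inequalities for concave functions\<close>

lemma antitone_deriv_slope_bounds:
  fixes g g' :: "real \<Rightarrow> real"
  assumes "a < b" and der: "\<And>t. a \<le> t \<Longrightarrow> t \<le> b \<Longrightarrow> (g has_real_derivative g' t) (at t)"
    and anti: "\<And>s t. a \<le> s \<Longrightarrow> s \<le> t \<Longrightarrow> t \<le> b \<Longrightarrow> g' t \<le> g' s"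
  shows "g' b * (b - a) \<le> g b - g a" "g b - g a \<le> g' a * (b - a)"
proof -
  obtain z where z: "a < z" "z < b" "g b - g a = (b - a) * g' z"
    using MVT2[OF assms(1) der] by blast
  have "g' b \<le> g' z" "g' z \<le> g' a" using anti z by auto
  then show "g' b * (b - a) \<le> g b - g a" "g b - g a \<le> g' a * (b - a)"
    using z assms(1) by (auto simp: mult.commute intro: mult_right_mono)
qed

lemma increment_le_of_deriv_le:
  fixes P Q p q :: "real \<Rightarrow> real"
  assumes "u \<le> v"
    and "\<And>t. u \<le> t \<Longrightarrow> t \<le> v \<Longrightarrow> (P has_real_derivative p t) (at t)"
    and "\<And>t. u \<le> t \<Longrightarrow> t \<le> v \<Longrightarrow> (Q has_real_derivative q t) (at t)"
    and "\<And>t. u \<le> t \<Longrightarrow> t \<le> v \<Longrightarrow> p t \<le> q t"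
  shows "P v - P u \<le> Q v - Q u"
proof -
  have "(\<lambda>t. Q t - P t) u \<le> (\<lambda>t. Q t - P t) v"
  proof (rule DERIV_nonneg_imp_nondecreasing[OF assms(1)])
    fix t assume "u \<le> t" "t \<le> v"
    then show "\<exists>y. DERIV (\<lambda>t. Q t - P t) t :> y \<and> 0 \<le> y"
      using assms by (intro exI[of _ "q t - p t"]) (auto intro!: derivative_intros)
  qed
  then show ?thesis by simp
qed

lemma antitone_deriv_chord_le:
  fixes g g' :: "real \<Rightarrow> real"
  assumes der: "\<And>t. a \<le> t \<Longrightarrow> t \<le> a + 1 \<Longrightarrow> (g has_real_derivative g' t) (at t)"
    and anti: "\<And>s t. a \<le> s \<Longrightarrow> s \<le> t \<Longrightarrow> t \<le> a + 1 \<Longrightarrow> g' t \<le> g' s"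
    and t: "a \<le> t" "t \<le> a + 1"
  shows "g a + (t - a) * (g (a + 1) - g a) \<le> g t"
proof (cases "t = a \<or> t = a + 1")
  case True then show ?thesis by auto
next
  case False
  then have t': "a < t" "t < a + 1" using t by auto
  have left: "g' t * (t - a) \<le> g t - g a"
    by (rule antitone_deriv_slope_bounds(1)[OF t'(1)]) (use der anti t' in auto)
  have right: "g (a + 1) - g t \<le> g' t * (a + 1 - t)"
    by (rule antitone_deriv_slope_bounds(2)[OF t'(2)]) (use der anti t' in auto)
  define u where "u = t - a"
  have u: "0 < u" "u < 1" using t' by (auto simp: u_def)
  have "u * (g (a + 1) - g a) = u * (g t - g a) + u * (g (a + 1) - g t)"
    by (simp add: algebra_simps)
  also have "u * (g (a + 1) - g t) \<le> u * (g' t * (1 - u))"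
    using right u by (intro mult_left_mono) (auto simp: u_def algebra_simps)
  also have "\<dots> = (1 - u) * (g' t * u)" by simp
  also have "\<dots> \<le> (1 - u) * (g t - g a)"
    using left u by (intro mult_left_mono) (auto simp: u_def)
  finally show ?thesis by (simp add: u_def algebra_simps)
qed

lemma antitone_deriv_midpoint_ge:
  fixes g g' :: "real \<Rightarrow> real"
  assumes der: "\<And>t. a \<le> t \<Longrightarrow> t \<le> a + 2 \<Longrightarrow> (g has_real_derivative g' t) (at t)"
    and anti: "\<And>s t. a \<le> s \<Longrightarrow> s \<le> t \<Longrightarrow> t \<le> a + 2 \<Longrightarrow> g' t \<le> g' s"
  shows "g a + g (a + 2) \<le> 2 * g (a + 1)"
proof -
  have "g' (a + 1) * ((a + 1) - a) \<le> g (a + 1) - g a"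
    by (rule antitone_deriv_slope_bounds(1)) (use der anti in auto)
  moreover have "g (a + 1 + 1) - g (a + 1) \<le> g' (a + 1) * ((a + 1 + 1) - (a + 1))"
    by (rule antitone_deriv_slope_bounds(2)) (use der anti in auto)
  ultimately show ?thesis by (simp add: add.assoc)
qed

text \<open>Quadrature on a unit cell for an antiderivative \<Phi> of a concave g: the trapezoidal rule
  underestimates the integral, linear extrapolation from the neighbouring cell overestimates it.\<close>

lemma trapezoid_le_increment:
  fixes g g' \<Phi> :: "real \<Rightarrow> real"
  assumes der\<Phi>: "\<And>t. a \<le> t \<Longrightarrow> t \<le> a + 1 \<Longrightarrow> (\<Phi> has_real_derivative g t) (at t)"
    and der: "\<And>t. a \<le> t \<Longrightarrow> t \<le> a + 1 \<Longrightarrow> (g has_real_derivative g' t) (at t)"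
    and anti: "\<And>s t. a \<le> s \<Longrightarrow> s \<le> t \<Longrightarrow> t \<le> a + 1 \<Longrightarrow> g' t \<le> g' s"
  shows "(g a + g (a + 1)) / 2 \<le> \<Phi> (a + 1) - \<Phi> a"
proof -
  define s where "s = g (a + 1) - g a"
  define P where "P = (\<lambda>t. g a * t + (t - a)^2 / 2 * s)"
  have "P (a + 1) - P a \<le> \<Phi> (a + 1) - \<Phi> a"
  proof (rule increment_le_of_deriv_le[where p = "\<lambda>t. g a + (t - a) * s" and q = g])
    fix t assume t: "a \<le> t" "t \<le> a + 1"
    show "(P has_real_derivative g a + (t - a) * s) (at t)"
      unfolding P_def by (auto intro!: derivative_eq_intros simp: field_simps)
    show "(\<Phi> has_real_derivative g t) (at t)" using der\<Phi> t by auto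
    show "g a + (t - a) * s \<le> g t"
      unfolding s_def by (rule antitone_deriv_chord_le) (use der anti t in auto)
  qed auto
  moreover have "P (a + 1) - P a = (g a + g (a + 1)) / 2"
    by (simp add: P_def s_def field_simps power2_eq_square)
  ultimately show ?thesis by simp
qed

lemma increment_le_extrapolation_left:
  fixes g g' \<Phi> :: "real \<Rightarrow> real"
  assumes der\<Phi>: "\<And>t. a \<le> t \<Longrightarrow> t \<le> a + 1 \<Longrightarrow> (\<Phi> has_real_derivative g t) (at t)"
    and der: "\<And>t. a \<le> t \<Longrightarrow> t \<le> a + 2 \<Longrightarrow> (g has_real_derivative g' t) (at t)"
    and anti: "\<And>s t. a \<le> s \<Longrightarrow> s \<le> t \<Longrightarrow> t \<le> a + 2 \<Longrightarrow> g' t \<le> g' s"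
  shows "\<Phi> (a + 1) - \<Phi> a \<le> 3/2 * g (a + 1) - 1/2 * g (a + 2)"
proof -
  define s where "s = g (a + 2) - g (a + 1)"
  define Q where "Q = (\<lambda>t. g (a + 1) * t + (t - a - 1)^2 / 2 * s)"
  have "\<Phi> (a + 1) - \<Phi> a \<le> Q (a + 1) - Q a"
  proof (rule increment_le_of_deriv_le[where q = "\<lambda>t. g (a + 1) + (t - a - 1) * s" and p = g])
    fix t assume t: "a \<le> t" "t \<le> a + 1"
    show "(Q has_real_derivative g (a + 1) + (t - a - 1) * s) (at t)"
      unfolding Q_def by (auto intro!: derivative_eq_intros simp: field_simps)
    show "(\<Phi> has_real_derivative g t) (at t)" using der\<Phi> t by auto
    show "g t \<le> g (a + 1) + (t - a - 1) * s"
    proof (cases "t = a + 1")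
      case False
      then have t': "t < a + 1" using t by auto
      have "g' (a + 1) * (a + 1 - t) \<le> g (a + 1) - g t"
        by (rule antitone_deriv_slope_bounds(1)[OF t']) (use der anti t in auto)
      moreover have "g (a + 1 + 1) - g (a + 1) \<le> g' (a + 1) * (a + 1 + 1 - (a + 1))"
        by (rule antitone_deriv_slope_bounds(2)) (use der anti t in auto)
      then have "(a + 1 - t) * s \<le> (a + 1 - t) * g' (a + 1)"
        using t' by (intro mult_left_mono) (auto simp: s_def add.assoc)
      ultimately show ?thesis by (simp add: algebra_simps)
    qed simp
  qed auto
  moreover have "Q (a + 1) - Q a = 3/2 * g (a + 1) - 1/2 * g (a + 2)"
    by (simp add: Q_def s_def field_simps power2_eq_square)
  ultimately show ?thesis by simp
qed

lemma increment_le_extrapolation_right: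
  fixes g g' \<Phi> :: "real \<Rightarrow> real"
  assumes der\<Phi>: "\<And>t. a + 1 \<le> t \<Longrightarrow> t \<le> a + 2 \<Longrightarrow> (\<Phi> has_real_derivative g t) (at t)"
    and der: "\<And>t. a \<le> t \<Longrightarrow> t \<le> a + 2 \<Longrightarrow> (g has_real_derivative g' t) (at t)"
    and anti: "\<And>s t. a \<le> s \<Longrightarrow> s \<le> t \<Longrightarrow> t \<le> a + 2 \<Longrightarrow> g' t \<le> g' s"
  shows "\<Phi> (a + 2) - \<Phi> (a + 1) \<le> 3/2 * g (a + 1) - 1/2 * g a"
proof -
  define s where "s = g (a + 1) - g a"
  define Q where "Q = (\<lambda>t. g (a + 1) * t + (t - a - 1)^2 / 2 * s)"
  have "\<Phi> (a + 2) - \<Phi> (a + 1) \<le> Q (a + 2) - Q (a + 1)"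
  proof (rule increment_le_of_deriv_le[where q = "\<lambda>t. g (a + 1) + (t - a - 1) * s" and p = g])
    fix t assume t: "a + 1 \<le> t" "t \<le> a + 2"
    show "(Q has_real_derivative g (a + 1) + (t - a - 1) * s) (at t)"
      unfolding Q_def by (auto intro!: derivative_eq_intros simp: field_simps)
    show "(\<Phi> has_real_derivative g t) (at t)" using der\<Phi> t by auto
    show "g t \<le> g (a + 1) + (t - a - 1) * s"
    proof (cases "t = a + 1")
      case False
      then have t': "a + 1 < t" using t by auto
      have "g t - g (a + 1) \<le> g' (a + 1) * (t - (a + 1))"
        by (rule antitone_deriv_slope_bounds(2)[OF t']) (use der anti t in auto)
      moreover have "g' (a + 1) * (a + 1 - a) \<le> g (a + 1) - g a"
        by (rule antitone_deriv_slope_bounds(1)) (use der anti t in auto)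
      then have "(t - a - 1) * g' (a + 1) \<le> (t - a - 1) * s"
        using t' by (intro mult_left_mono) (auto simp: s_def)
      ultimately show ?thesis by (simp add: algebra_simps)
    qed simp
  qed (use assms in auto)
  moreover have "Q (a + 2) - Q (a + 1) = 3/2 * g (a + 1) - 1/2 * g a"
    by (simp add: Q_def s_def field_simps power2_eq_square)
  ultimately show ?thesis by simp
qed

section \<open>The power function t powr (1 - \<alpha>)\<close>

definition pw :: "real \<Rightarrow> real \<Rightarrow> real" where
  "pw \<alpha> x = x powr (1 - \<alpha>)"

definition pw_antideriv :: "real \<Rightarrow> real \<Rightarrow> real" where
  "pw_antideriv \<alpha> x = x powr (2 - \<alpha>) / (2 - \<alpha>)"

definition pw_deriv :: "real \<Rightarrow> real \<Rightarrow> real" where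
  "pw_deriv \<alpha> x = (1 - \<alpha>) * x powr (- \<alpha>)"

definition pw_deriv2 :: "real \<Rightarrow> real \<Rightarrow> real" where
  "pw_deriv2 \<alpha> x = (1 - \<alpha>) * (- \<alpha>) * x powr (- \<alpha> - 1)"

definition pw_incr :: "real \<Rightarrow> real \<Rightarrow> real" where
  "pw_incr \<alpha> x = pw \<alpha> (x + 1) - pw \<alpha> x"

definition pw_integral :: "real \<Rightarrow> real \<Rightarrow> real" where
  "pw_integral \<alpha> x = pw_antideriv \<alpha> (x + 1) - pw_antideriv \<alpha> x"

definition pw_trapezoid_defect :: "real \<Rightarrow> real \<Rightarrow> real" where
  "pw_trapezoid_defect \<alpha> x = pw_integral \<alpha> x - (pw \<alpha> x + pw \<alpha> (x + 1)) / 2"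

lemma coef_a_eq_pw_incr: "1 \<le> m \<Longrightarrow> coef_a \<alpha> \<sigma> m = pw_incr \<alpha> (real m - 1 + \<sigma>)"
  by (simp add: coef_a_def pw_incr_def pw_def add.commute)

lemma coef_b_eq_pw_trapezoid_defect:
  "1 \<le> m \<Longrightarrow> coef_b \<alpha> \<sigma> m = pw_trapezoid_defect \<alpha> (real m - 1 + \<sigma>)"
  by (simp add: coef_b_def pw_trapezoid_defect_def pw_integral_def pw_antideriv_def pw_def
      diff_divide_distrib add.commute)

context
  fixes \<alpha> :: real
  assumes alpha_pos: "0 < \<alpha>" and alpha_lt_1: "\<alpha> < 1"
begin

lemma has_real_derivative_pw_antideriv:
  assumes "0 < x" shows "(pw_antideriv \<alpha> has_real_derivative pw \<alpha> x) (at x)"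
proof -
  have "((\<lambda>z. z powr (2 - \<alpha>)) has_real_derivative (2 - \<alpha>) * x powr (2 - \<alpha> - 1)) (at x)"
    by (rule has_real_derivative_powr) (use assms in auto)
  then have "((\<lambda>z. z powr (2 - \<alpha>) / (2 - \<alpha>))
      has_real_derivative (2 - \<alpha>) * x powr (2 - \<alpha> - 1) / (2 - \<alpha>)) (at x)"
    by (rule DERIV_cdivide)
  then show ?thesis
    using alpha_lt_1 unfolding pw_antideriv_def[abs_def] by (simp add: pw_def diff_diff_eq add.commute)
qed

lemma has_real_derivative_pw:
  assumes "0 < x" shows "(pw \<alpha> has_real_derivative pw_deriv \<alpha> x) (at x)"
proof -
  have "((\<lambda>z. z powr (1 - \<alpha>)) has_real_derivative (1 - \<alpha>) * x powr (1 - \<alpha> - 1)) (at x)"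
    by (rule has_real_derivative_powr) (use assms in auto)
  then show ?thesis unfolding pw_def pw_deriv_def by simp
qed

lemma has_real_derivative_pw_deriv:
  assumes "0 < x" shows "(pw_deriv \<alpha> has_real_derivative pw_deriv2 \<alpha> x) (at x)"
proof -
  have "((\<lambda>z. z powr (- \<alpha>)) has_real_derivative (- \<alpha>) * x powr (- \<alpha> - 1)) (at x)"
    by (rule has_real_derivative_powr) (use assms in auto)
  then have "((\<lambda>z. (1 - \<alpha>) * z powr (- \<alpha>))
      has_real_derivative (1 - \<alpha>) * ((- \<alpha>) * x powr (- \<alpha> - 1))) (at x)"
    by (rule DERIV_cmult)
  then show ?thesis unfolding pw_deriv2_def pw_deriv_def by (simp add: mult.assoc)
qed

lemma pw_deriv_antimono: "0 < x \<Longrightarrow> x \<le> y \<Longrightarrow> pw_deriv \<alpha> y \<le> pw_deriv \<alpha> x"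
  unfolding pw_deriv_def using alpha_pos alpha_lt_1 powr_mono2'[of "- \<alpha>" x y]
  by (intro mult_left_mono) auto

lemma pw_deriv2_mono: "0 < x \<Longrightarrow> x \<le> y \<Longrightarrow> pw_deriv2 \<alpha> x \<le> pw_deriv2 \<alpha> y"
  unfolding pw_deriv2_def using alpha_pos alpha_lt_1 powr_mono2'[of "- \<alpha> - 1" x y]
  by (intro mult_left_mono_neg) (auto simp: mult_nonneg_nonpos)

lemma pw_mono: "0 \<le> x \<Longrightarrow> x \<le> y \<Longrightarrow> pw \<alpha> x \<le> pw \<alpha> y"
  unfolding pw_def using alpha_lt_1 by (intro powr_mono2) auto

lemma has_real_derivative_pw_incr:
  "0 < t \<Longrightarrow> (pw_incr \<alpha> has_real_derivative pw_deriv \<alpha> (t + 1) - pw_deriv \<alpha> t) (at t)"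
  unfolding pw_incr_def
  by (auto intro!: derivative_eq_intros has_real_derivative_pw simp flip: DERIV_shift)

lemma has_real_derivative_pw_integral:
  "0 < t \<Longrightarrow> (pw_integral \<alpha> has_real_derivative pw_incr \<alpha> t) (at t)"
  unfolding pw_integral_def pw_incr_def
  by (auto intro!: derivative_eq_intros has_real_derivative_pw_antideriv simp flip: DERIV_shift)

lemma pw_deriv_decrement_antimono:
  assumes "0 < x" "x \<le> y"
  shows "pw_deriv \<alpha> y - pw_deriv \<alpha> (y + 1) \<le> pw_deriv \<alpha> x - pw_deriv \<alpha> (x + 1)"
proof -
  have "pw_deriv \<alpha> (x + 1) - pw_deriv \<alpha> x \<le> pw_deriv \<alpha> (y + 1) - pw_deriv \<alpha> y"
  proof (rule DERIV_nonneg_imp_nondecreasing[OF assms(2)])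
    fix t assume t: "x \<le> t" "t \<le> y"
    have "((\<lambda>x. pw_deriv \<alpha> (x + 1) - pw_deriv \<alpha> x)
        has_real_derivative pw_deriv2 \<alpha> (t + 1) - pw_deriv2 \<alpha> t) (at t)"
      using t assms
      by (auto intro!: derivative_eq_intros has_real_derivative_pw_deriv simp flip: DERIV_shift)
    moreover have "pw_deriv2 \<alpha> t \<le> pw_deriv2 \<alpha> (t + 1)" using pw_deriv2_mono t assms by auto
    ultimately show "\<exists>d. ((\<lambda>x. pw_deriv \<alpha> (x + 1) - pw_deriv \<alpha> x) has_real_derivative d) (at t)
        \<and> 0 \<le> d"
      by auto
  qed
  then show ?thesis by simp
qed

lemma pw_trapezoid_defect_nonneg:
  assumes "0 < x" shows "0 \<le> pw_trapezoid_defect \<alpha> x"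
proof -
  have "(pw \<alpha> x + pw \<alpha> (x + 1)) / 2 \<le> pw_antideriv \<alpha> (x + 1) - pw_antideriv \<alpha> x"
    by (rule trapezoid_le_increment[where g' = "pw_deriv \<alpha>"])
      (use assms in \<open>auto intro: has_real_derivative_pw_antideriv has_real_derivative_pw
        pw_deriv_antimono\<close>)
  then show ?thesis by (simp add: pw_trapezoid_defect_def pw_integral_def)
qed

lemma pw_integral_le_extrapolation_left:
  assumes "0 < x" shows "pw_integral \<alpha> x \<le> 3/2 * pw \<alpha> (x + 1) - 1/2 * pw \<alpha> (x + 2)"
  unfolding pw_integral_def
  by (rule increment_le_extrapolation_left[where g' = "pw_deriv \<alpha>"])
    (use assms in \<open>auto intro: has_real_derivative_pw_antideriv has_real_derivative_pw
      pw_deriv_antimono\<close>)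

lemma pw_integral_le_extrapolation_right:
  assumes "0 < x" shows "pw_integral \<alpha> (x + 2) \<le> 3/2 * pw \<alpha> (x + 2) - 1/2 * pw \<alpha> (x + 1)"
proof -
  have "pw_antideriv \<alpha> ((x + 1) + 2) - pw_antideriv \<alpha> ((x + 1) + 1)
      \<le> 3/2 * pw \<alpha> ((x + 1) + 1) - 1/2 * pw \<alpha> (x + 1)"
    by (rule increment_le_extrapolation_right[where g' = "pw_deriv \<alpha>"])
      (use assms in \<open>auto intro: has_real_derivative_pw_antideriv has_real_derivative_pw
        pw_deriv_antimono\<close>)
  then show ?thesis by (simp add: pw_integral_def add.assoc)
qed

lemma pw_midpoint_ge: "0 < x \<Longrightarrow> pw \<alpha> x + pw \<alpha> (x + 2) \<le> 2 * pw \<alpha> (x + 1)"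
  by (rule antitone_deriv_midpoint_ge[where g' = "pw_deriv \<alpha>"])
    (auto intro: has_real_derivative_pw pw_deriv_antimono)

lemma pw_incr_midpoint_le:
  assumes "0 < x" shows "2 * pw_incr \<alpha> (x + 1) \<le> pw_incr \<alpha> x + pw_incr \<alpha> (x + 2)"
proof -
  have "(\<lambda>t. - pw_incr \<alpha> t) x + (\<lambda>t. - pw_incr \<alpha> t) (x + 2) \<le> 2 * (\<lambda>t. - pw_incr \<alpha> t) (x + 1)"
    by (rule antitone_deriv_midpoint_ge[where g' = "\<lambda>t. pw_deriv \<alpha> t - pw_deriv \<alpha> (t + 1)"])
      (use assms in \<open>auto intro!: derivative_eq_intros has_real_derivative_pw_incr
        pw_deriv_decrement_antimono\<close>)
  then show ?thesis by simp
qed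

lemma pw_trapezoid_defect_antimono:
  assumes "0 < x" shows "pw_trapezoid_defect \<alpha> (x + 1) \<le> pw_trapezoid_defect \<alpha> x"
proof -
  have "((\<lambda>t. - pw_incr \<alpha> t) x + (\<lambda>t. - pw_incr \<alpha> t) (x + 1)) / 2
      \<le> (\<lambda>t. - pw_integral \<alpha> t) (x + 1) - (\<lambda>t. - pw_integral \<alpha> t) x"
    by (rule trapezoid_le_increment[where g' = "\<lambda>t. pw_deriv \<alpha> t - pw_deriv \<alpha> (t + 1)"])
      (use assms in \<open>auto intro!: derivative_eq_intros has_real_derivative_pw_incr
        has_real_derivative_pw_integral pw_deriv_decrement_antimono\<close>)
  then show ?thesis by (simp add: pw_trapezoid_defect_def pw_incr_def field_simps)
qed

lemma pw_incr_bounds: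
  assumes "0 < x" shows "pw_deriv \<alpha> (x + 1) \<le> pw_incr \<alpha> x" "pw_incr \<alpha> x \<le> pw_deriv \<alpha> x"
proof -
  have "pw_deriv \<alpha> (x + 1) * (x + 1 - x) \<le> pw \<alpha> (x + 1) - pw \<alpha> x"
       "pw \<alpha> (x + 1) - pw \<alpha> x \<le> pw_deriv \<alpha> x * (x + 1 - x)"
    by (rule antitone_deriv_slope_bounds;
        use assms in \<open>auto intro: has_real_derivative_pw pw_deriv_antimono\<close>)+
  then show "pw_deriv \<alpha> (x + 1) \<le> pw_incr \<alpha> x" "pw_incr \<alpha> x \<le> pw_deriv \<alpha> x"
    by (auto simp: pw_incr_def)
qed

text \<open>With a_s and b_s evaluated at x = s - 1 + \<sigma>, the next two lemmas are the steps
  c_{s+1} \<le> c_s for c_s = a_s + b_{s+1} - b_s and for the last weight c_j = a_j - b_j.\<close>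

lemma pw_weight_step_interior:
  assumes "0 < x"
  shows "pw_incr \<alpha> (x + 1) + pw_trapezoid_defect \<alpha> (x + 2) - pw_trapezoid_defect \<alpha> (x + 1)
      \<le> pw_incr \<alpha> x + pw_trapezoid_defect \<alpha> (x + 1) - pw_trapezoid_defect \<alpha> x"
  using pw_integral_le_extrapolation_left[OF assms] pw_trapezoid_defect_nonneg[of "x + 1"]
    pw_integral_le_extrapolation_right[OF assms] pw_incr_midpoint_le[OF assms] assms
  by (simp add: pw_incr_def pw_trapezoid_defect_def add.assoc field_simps)

lemma pw_weight_step_last:
  assumes "0 < x"
  shows "pw_incr \<alpha> (x + 1) - pw_trapezoid_defect \<alpha> (x + 1)
      \<le> pw_incr \<alpha> x + pw_trapezoid_defect \<alpha> (x + 1) - pw_trapezoid_defect \<alpha> x"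
  using pw_integral_le_extrapolation_left[OF assms] pw_trapezoid_defect_nonneg[of "x + 1"]
    pw_midpoint_ge[OF assms] assms
  by (simp add: pw_incr_def pw_trapezoid_defect_def add.assoc field_simps)

lemma pw_weight_last_ge:
  assumes "0 < x" shows "pw_deriv \<alpha> (x + 1) / 2 \<le> pw_incr \<alpha> x - pw_trapezoid_defect \<alpha> x"
  using pw_integral_le_extrapolation_left[OF assms] pw_mono[of "x + 1" "x + 2"]
    pw_incr_bounds(1)[OF assms] assms
  by (simp add: pw_incr_def pw_trapezoid_defect_def field_simps)

end

section \<open>The L2-1\<sigma> weights\<close>

context
  fixes \<alpha> \<sigma> :: real
  assumes alpha_pos: "0 < \<alpha>" and alpha_lt_1: "\<alpha> < 1"
    and sigma_ge: "1 - \<alpha> \<le> \<sigma>" and sigma_le_1: "\<sigma> \<le> 1"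
begin

lemma sigma_pos: "0 < \<sigma>"
  using alpha_lt_1 sigma_ge by linarith

lemma sigma_powr_eq: "\<sigma> powr (1 - \<alpha>) = \<sigma> * \<sigma> powr (- \<alpha>)"
  using sigma_pos powr_add[of \<sigma> 1 "- \<alpha>"] by simp

lemma coef_c_0_ge: "1 \<le> j \<Longrightarrow> \<sigma> powr (1 - \<alpha>) \<le> coef_c \<alpha> \<sigma> j 0"
  using pw_trapezoid_defect_nonneg[OF alpha_pos alpha_lt_1 sigma_pos]
  by (simp add: coef_c_def coef_a_def coef_b_eq_pw_trapezoid_defect)

lemma coef_c_1_le: "1 \<le> j \<Longrightarrow> coef_c \<alpha> \<sigma> j 1 \<le> pw_incr \<alpha> \<sigma>"
  using pw_trapezoid_defect_nonneg[OF alpha_pos alpha_lt_1 sigma_pos]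
    pw_trapezoid_defect_antimono[OF alpha_pos alpha_lt_1 sigma_pos]
  by (auto simp: coef_c_def coef_a_eq_pw_incr coef_b_eq_pw_trapezoid_defect add.commute)

lemma pw_incr_sigma_le: "pw_incr \<alpha> \<sigma> \<le> (1 - \<alpha>) * \<sigma> powr (- \<alpha>)"
  using pw_incr_bounds(2)[OF alpha_pos alpha_lt_1 sigma_pos] by (simp add: pw_deriv_def)

lemma coef_c_antimono: "s < j \<Longrightarrow> coef_c \<alpha> \<sigma> j (Suc s) \<le> coef_c \<alpha> \<sigma> j s"
proof (cases s)
  case 0
  assume "s < j"
  then have j: "1 \<le> j" by simp
  have "(1 - \<alpha>) * \<sigma> powr (- \<alpha>) \<le> \<sigma> powr (1 - \<alpha>)"
    unfolding sigma_powr_eq using sigma_ge by (intro mult_right_mono) auto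
  then show ?thesis
    using 0 coef_c_0_ge[OF j] coef_c_1_le[OF j] pw_incr_sigma_le by simp
next
  case (Suc r)
  assume sj: "s < j"
  define x where "x = real r + \<sigma>"
  have x: "0 < x" using sigma_pos by (simp add: x_def)
  have cs: "coef_c \<alpha> \<sigma> j s = pw_incr \<alpha> x + pw_trapezoid_defect \<alpha> (x + 1) - pw_trapezoid_defect \<alpha> x"
    using sj Suc by (simp add: coef_c_def coef_a_eq_pw_incr coef_b_eq_pw_trapezoid_defect x_def add_ac)
  show ?thesis
  proof (cases "Suc s = j")
    case True
    then have "coef_c \<alpha> \<sigma> j (Suc s) = pw_incr \<alpha> (x + 1) - pw_trapezoid_defect \<alpha> (x + 1)"
      using Suc
      by (simp add: coef_c_def coef_a_eq_pw_incr coef_b_eq_pw_trapezoid_defect x_def add_ac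
          flip: True)
    then show ?thesis using cs pw_weight_step_last[OF alpha_pos alpha_lt_1 x] by simp
  next
    case False
    then have "coef_c \<alpha> \<sigma> j (Suc s)
        = pw_incr \<alpha> (x + 1) + pw_trapezoid_defect \<alpha> (x + 2) - pw_trapezoid_defect \<alpha> (x + 1)"
      using sj Suc
      by (simp add: coef_c_def coef_a_eq_pw_incr coef_b_eq_pw_trapezoid_defect x_def add_ac)
    then show ?thesis using cs pw_weight_step_interior[OF alpha_pos alpha_lt_1 x] by simp
  qed
qed

lemma coef_c_diag_ge: "(1 - \<alpha>) / 2 * (real j + \<sigma>) powr (- \<alpha>) \<le> coef_c \<alpha> \<sigma> j j"
proof (cases j)
  case 0
  have "(1 - \<alpha>) / 2 * \<sigma> powr (- \<alpha>) \<le> \<sigma> * \<sigma> powr (- \<alpha>)"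
    using sigma_ge alpha_lt_1 by (intro mult_right_mono) auto
  then show ?thesis using 0 sigma_powr_eq by (simp add: coef_c_def coef_a_def)
next
  case (Suc r)
  define x where "x = real r + \<sigma>"
  have x: "0 < x" using sigma_pos by (simp add: x_def)
  have "coef_c \<alpha> \<sigma> j j = pw_incr \<alpha> x - pw_trapezoid_defect \<alpha> x"
    using Suc by (simp add: coef_c_def coef_a_eq_pw_incr coef_b_eq_pw_trapezoid_defect x_def)
  moreover have "pw_deriv \<alpha> (x + 1) = (1 - \<alpha>) * (real j + \<sigma>) powr (- \<alpha>)"
    by (simp add: pw_deriv_def x_def Suc add_ac)
  ultimately show ?thesis using pw_weight_last_ge[OF alpha_pos alpha_lt_1 x] by simp
qed

lemma coef_c_1_le_coef_c_0:
  assumes j: "1 \<le> j" shows "\<sigma>\<^sup>2 * coef_c \<alpha> \<sigma> j 1 \<le> (1 - \<alpha>) * coef_c \<alpha> \<sigma> j 0"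
proof -
  have "\<sigma>\<^sup>2 * coef_c \<alpha> \<sigma> j 1 \<le> \<sigma>\<^sup>2 * ((1 - \<alpha>) * \<sigma> powr (- \<alpha>))"
    using coef_c_1_le[OF j] pw_incr_sigma_le by (intro mult_left_mono) auto
  also have "\<dots> = \<sigma> * ((1 - \<alpha>) * \<sigma> powr (1 - \<alpha>))"
    by (simp add: sigma_powr_eq power2_eq_square)
  also have "\<dots> \<le> (1 - \<alpha>) * \<sigma> powr (1 - \<alpha>)"
    using sigma_le_1 alpha_lt_1 mult_right_mono[of \<sigma> 1] by simp
  also have "\<dots> \<le> (1 - \<alpha>) * coef_c \<alpha> \<sigma> j 0"
    using coef_c_0_ge[OF j] alpha_lt_1 by simp
  finally show ?thesis .
qed

end

section \<open>Energy inequality and a priori bound in time\<close>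

lemma sum_weighted_decrements_ge:
  fixes w A :: "nat \<Rightarrow> real"
  assumes A: "\<And>s. 0 \<le> A s" and w0: "0 \<le> w 0"
    and mono: "\<And>s. s < Suc n \<Longrightarrow> w s \<le> w (Suc s)"
  shows "(w (Suc n) - w n) * A (Suc n) - w (Suc n) * A (Suc (Suc n))
         \<le> (\<Sum>s = 0..Suc n. w s * (A s - A (Suc s)))"
  using mono
proof (induction n)
  case 0
  have "0 \<le> w 0 * A 0" using A w0 by simp
  then show ?case by (simp add: algebra_simps)
next
  case (Suc n)
  then have "0 \<le> (w (Suc n) - w n) * A (Suc n)" using A by simp
  with Suc show ?case by (simp add: algebra_simps)
qed

lemma alikhanov_energy_ineq:
  fixes v w :: "nat \<Rightarrow> real"
  assumes mono: "\<And>s. s < j \<Longrightarrow> w s \<le> w (Suc s)" and w0: "0 \<le> w 0"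
    and \<sigma>: "1/2 \<le> \<sigma>"
    and top: "1 \<le> j \<Longrightarrow> w j * (1 - \<sigma>)\<^sup>2 \<le> (w j - w (j - 1)) * \<sigma>\<^sup>2"
  shows "1/2 * (\<Sum>s = 0..j. w s * ((v (Suc s))\<^sup>2 - (v s)\<^sup>2))
         \<le> (\<sigma> * v (Suc j) + (1 - \<sigma>) * v j) * (\<Sum>s = 0..j. w s * (v (Suc s) - v s))"
proof -
  define v\<sigma> where "v\<sigma> = \<sigma> * v (Suc j) + (1 - \<sigma>) * v j"
  define u where "u = (\<lambda>s. (v\<sigma> - v s)\<^sup>2)"
  have eq: "v\<sigma> * (\<Sum>s = 0..j. w s * (v (Suc s) - v s))
      - 1/2 * (\<Sum>s = 0..j. w s * ((v (Suc s))\<^sup>2 - (v s)\<^sup>2))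
      = 1/2 * (\<Sum>s = 0..j. w s * (u s - u (Suc s)))"
    by (simp add: sum_distrib_left sum_subtractf[symmetric] u_def power2_eq_square algebra_simps)
  have u_ends: "u j = \<sigma>\<^sup>2 * (v (Suc j) - v j)\<^sup>2" "u (Suc j) = (1 - \<sigma>)\<^sup>2 * (v (Suc j) - v j)\<^sup>2"
    by (simp_all add: u_def v\<sigma>_def power2_eq_square algebra_simps)
  have "0 \<le> (\<Sum>s = 0..j. w s * (u s - u (Suc s)))"
  proof (cases j)
    case 0
    have "(1 - \<sigma>)\<^sup>2 \<le> \<sigma>\<^sup>2" using \<sigma> by (simp add: power2_eq_square algebra_simps)
    then have "(1 - \<sigma>)\<^sup>2 * (v (Suc 0) - v 0)\<^sup>2 \<le> \<sigma>\<^sup>2 * (v (Suc 0) - v 0)\<^sup>2"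
      by (intro mult_right_mono) auto
    then show ?thesis using u_ends 0 w0 by simp
  next
    case (Suc n)
    have "(w (Suc n) - w n) * u (Suc n) - w (Suc n) * u (Suc (Suc n))
        \<le> (\<Sum>s = 0..Suc n. w s * (u s - u (Suc s)))"
      by (rule sum_weighted_decrements_ge) (use mono w0 Suc in \<open>auto simp: u_def\<close>)
    moreover have "w j * (1 - \<sigma>)\<^sup>2 * (v (Suc j) - v j)\<^sup>2 \<le> (w j - w (j - 1)) * \<sigma>\<^sup>2 * (v (Suc j) - v j)\<^sup>2"
      using top Suc by (intro mult_right_mono) auto
    ultimately show ?thesis using u_ends Suc by (simp add: algebra_simps)
  qed
  with eq show ?thesis by (simp add: v\<sigma>_def)
qed

lemma coef_c_energy_ineq:
  fixes v :: "nat \<Rightarrow> real"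
  assumes \<alpha>: "0 < \<alpha>" "\<alpha> < 1" and \<sigma>: "\<sigma> = 1 - \<alpha> / 2"
  shows "1/2 * (\<Sum>s = 0..j. coef_c \<alpha> \<sigma> j (j - s) * ((v (Suc s))\<^sup>2 - (v s)\<^sup>2))
         \<le> (\<sigma> * v (Suc j) + (1 - \<sigma>) * v j) * (\<Sum>s = 0..j. coef_c \<alpha> \<sigma> j (j - s) * (v (Suc s) - v s))"
proof (rule alikhanov_energy_ineq)
  have \<sigma>_range: "1 - \<alpha> \<le> \<sigma>" "\<sigma> \<le> 1" using \<alpha> \<sigma> by auto
  note coef = coef_c_antimono[OF \<alpha> \<sigma>_range] coef_c_diag_ge[OF \<alpha> \<sigma>_range]
    coef_c_1_le_coef_c_0[OF \<alpha> \<sigma>_range]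
  show "coef_c \<alpha> \<sigma> j (j - s) \<le> coef_c \<alpha> \<sigma> j (j - Suc s)" if "s < j" for s
    using coef(1)[of "j - Suc s" j] that by (simp add: Suc_diff_Suc)
  have "0 \<le> (1 - \<alpha>) / 2 * (real j + \<sigma>) powr (- \<alpha>)" using \<alpha> by simp
  then show "0 \<le> coef_c \<alpha> \<sigma> j (j - 0)" using coef(2)[of j] by simp
  show "1/2 \<le> \<sigma>" using \<alpha> \<sigma> by simp
  show "coef_c \<alpha> \<sigma> j (j - j) * (1 - \<sigma>)\<^sup>2
      \<le> (coef_c \<alpha> \<sigma> j (j - j) - coef_c \<alpha> \<sigma> j (j - (j - 1))) * \<sigma>\<^sup>2" if "1 \<le> j"
  proof -
    have "j - j = 0" "j - (j - 1) = 1" using that by auto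
    moreover have "\<sigma>\<^sup>2 * coef_c \<alpha> \<sigma> j 1 \<le> (1 - \<alpha>) * coef_c \<alpha> \<sigma> j 0"
      using coef(3)[OF that] .
    moreover have "1 - \<alpha> = \<sigma>\<^sup>2 - (1 - \<sigma>)\<^sup>2" using \<sigma> by (simp add: power2_eq_square algebra_simps)
    ultimately show ?thesis by (simp add: algebra_simps)
  qed
qed

lemma sum_weighted_increments_ge:
  fixes w E :: "nat \<Rightarrow> real"
  assumes mono: "\<And>s. s < n \<Longrightarrow> w s \<le> w (Suc s)" and bound: "\<And>s. s \<le> n \<Longrightarrow> E s \<le> B"
  shows "w n * E (Suc n) - (w n - w 0) * B - w 0 * E 0 \<le> (\<Sum>s = 0..n. w s * (E (Suc s) - E s))"
  using mono bound
proof (induction n)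
  case (Suc n)
  have "(w (Suc n) - w n) * E (Suc n) \<le> (w (Suc n) - w n) * B"
    using Suc.prems by (intro mult_left_mono) auto
  with Suc show ?case by (simp add: algebra_simps)
qed (simp add: algebra_simps)

lemma fractional_gronwall:
  fixes \<kappa> :: "nat \<Rightarrow> nat \<Rightarrow> real" and E :: "nat \<Rightarrow> real"
  assumes \<mu>: "0 < \<mu>" and G: "0 \<le> G"
    and antimono: "\<And>j s. j < J \<Longrightarrow> s < j \<Longrightarrow> \<kappa> j (Suc s) \<le> \<kappa> j s"
    and diag: "\<And>j. j < J \<Longrightarrow> \<mu> \<le> \<kappa> j j"
    and ineq: "\<And>j. j < J \<Longrightarrow> (\<Sum>s = 0..j. \<kappa> j (j - s) * (E (Suc s) - E s)) \<le> G"
  shows "j \<le> J \<Longrightarrow> E j \<le> E 0 + G / \<mu>"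
proof (induction j rule: less_induct)
  case (less j)
  show ?case
  proof (cases j)
    case (Suc k)
    have kJ: "k < J" using less.prems Suc by simp
    define B where "B = E 0 + G / \<mu>"
    have below: "E s \<le> B" if "s \<le> k" for s using less.IH[of s] that Suc less.prems by (simp add: B_def)
    have \<kappa>_le_0: "\<kappa> k r \<le> \<kappa> k 0" if "r \<le> k" for r
      using that
    proof (induction r)
      case (Suc r)
      then show ?case using antimono[OF kJ, of r] by simp
    qed simp
    have reversed_mono: "\<kappa> k (k - s) \<le> \<kappa> k (k - Suc s)" if "s < k" for s
      using antimono[OF kJ, of "k - Suc s"] that by (simp add: Suc_diff_Suc)
    have "\<kappa> k (k - k) * E (Suc k) - (\<kappa> k (k - k) - \<kappa> k (k - 0)) * B - \<kappa> k (k - 0) * E 0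
        \<le> (\<Sum>s = 0..k. \<kappa> k (k - s) * (E (Suc s) - E s))"
      by (rule sum_weighted_increments_ge[where w = "\<lambda>s. \<kappa> k (k - s)"])
        (use below reversed_mono in auto)
    then have main: "\<kappa> k 0 * E (Suc k) \<le> G + (\<kappa> k 0 - \<kappa> k k) * B + \<kappa> k k * E 0"
      using ineq[OF kJ] by simp
    have "G = \<mu> * (G / \<mu>)" using \<mu> by simp
    also have "\<dots> \<le> \<kappa> k k * (G / \<mu>)" using diag[OF kJ] G \<mu> by (intro mult_right_mono) auto
    finally have "\<kappa> k 0 * E (Suc k) \<le> \<kappa> k 0 * B" using main by (simp add: B_def algebra_simps)
    moreover have "0 < \<kappa> k 0" using \<kappa>_le_0[of k] diag[OF kJ] \<mu> by simp
    ultimately show ?thesis using Suc by (simp add: B_def)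
  qed (use \<mu> G in simp)
qed

section \<open>Spatial estimates\<close>

lemma sum_second_diff_mult_eq:
  fixes z :: "nat \<Rightarrow> real"
  assumes "z 0 = 0"
  shows "(\<Sum>i = 1..m. (z (i + 1) - 2 * z i + z (i - 1)) * z i)
       = - (\<Sum>k = 1..Suc m. (z k - z (k - 1))\<^sup>2) + (z (Suc m) - z m) * z (Suc m)"
  by (induction m) (use assms in \<open>simp_all add: power2_eq_square algebra_simps\<close>)

lemma sum_second_diff_sq_le:
  fixes z :: "nat \<Rightarrow> real"
  shows "(\<Sum>i = 1..m. (z (i + 1) - 2 * z i + z (i - 1))\<^sup>2)
       \<le> 4 * (\<Sum>k = 1..Suc m. (z k - z (k - 1))\<^sup>2) - 2 * (z (Suc m) - z m)\<^sup>2"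
proof (induction m)
  case (Suc m)
  have "0 \<le> ((z (Suc (Suc m)) - z (Suc m)) + (z (Suc m) - z m))\<^sup>2" by simp
  then have "(z (Suc m + 1) - 2 * z (Suc m) + z (Suc m - 1))\<^sup>2
      \<le> 2 * (z (Suc (Suc m)) - z (Suc m))\<^sup>2 + 2 * (z (Suc m) - z m)\<^sup>2"
    by (simp add: power2_eq_square algebra_simps)
  with Suc show ?case by simp
qed simp

lemma sum_neighbour_sq_le:
  fixes z :: "nat \<Rightarrow> real"
  assumes "z 0 = 0"
  shows "(\<Sum>i = 1..m. (z (i - 1))\<^sup>2 + (z (i + 1))\<^sup>2) \<le> 2 * (\<Sum>i = 1..m. (z i)\<^sup>2) + (z (Suc m))\<^sup>2 - (z m)\<^sup>2"
  by (induction m) (use assms in simp_all)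

lemma compact_average_sq_le:
  fixes a b c :: real
  shows "((a + 10 * b + c) / 12)\<^sup>2 \<le> (a\<^sup>2 + 10 * b\<^sup>2 + c\<^sup>2) / 12"
proof -
  have "0 \<le> 10 * (a - b)\<^sup>2 + 10 * (b - c)\<^sup>2 + (a - c)\<^sup>2" by simp
  then show ?thesis by (simp add: power2_eq_square field_simps)
qed

lemma sq_le_sum_diff_sq:
  fixes z :: "nat \<Rightarrow> real"
  assumes "z 0 = 0"
  shows "(z i)\<^sup>2 \<le> real i * (\<Sum>k = 1..i. (z k - z (k - 1))\<^sup>2)"
proof (induction i)
  case (Suc i)
  define d where "d = z (Suc i) - z i"
  define S where "S = (\<Sum>k = 1..i. (z k - z (k - 1))\<^sup>2)"
  have IH: "(z i)\<^sup>2 \<le> real i * S" using Suc by (simp add: S_def)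
  have sum_Suc: "(\<Sum>k = 1..Suc i. (z k - z (k - 1))\<^sup>2) = S + d\<^sup>2" by (simp add: S_def d_def)
  have "(z i + d)\<^sup>2 \<le> real (Suc i) * (S + d\<^sup>2)"
  proof (cases "i = 0")
    case False
    have "real i * (z i + d)\<^sup>2 \<le> real i * (z i + d)\<^sup>2 + (z i - real i * d)\<^sup>2" by simp
    also have "\<dots> = (real i + 1) * (z i)\<^sup>2 + real i * (real i + 1) * d\<^sup>2"
      by (simp add: power2_eq_square algebra_simps)
    also have "\<dots> \<le> (real i + 1) * (real i * S) + real i * (real i + 1) * d\<^sup>2"
      using IH by (intro add_right_mono mult_left_mono) auto
    also have "\<dots> = real i * (real (Suc i) * (S + d\<^sup>2))" by (simp add: algebra_simps)
    finally show ?thesis using False by (simp add: mult_le_cancel_left)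
  qed (simp add: assms S_def)
  then show ?case unfolding sum_Suc by (simp add: d_def)
qed (use assms in simp)

lemma discrete_poincare:
  fixes z :: "nat \<Rightarrow> real"
  assumes "z 0 = 0"
  shows "(\<Sum>i = 1..m. (z i)\<^sup>2) \<le> real (Suc m) ^ 2 / 2 * (\<Sum>k = 1..Suc m. (z k - z (k - 1))\<^sup>2)"
proof -
  define Q where "Q = (\<Sum>k = 1..Suc m. (z k - z (k - 1))\<^sup>2)"
  have Q: "0 \<le> Q" unfolding Q_def by (intro sum_nonneg) auto
  have "(\<Sum>i = 1..m. (z i)\<^sup>2) \<le> (\<Sum>i = 1..m. real i * Q)"
  proof (rule sum_mono)
    fix i assume i: "i \<in> {1..m}"
    have "(\<Sum>k = 1..i. (z k - z (k - 1))\<^sup>2) \<le> Q"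
      unfolding Q_def using i by (intro sum_mono2) auto
    then show "(z i)\<^sup>2 \<le> real i * Q"
      using sq_le_sum_diff_sq[of z i, OF assms] by (meson mult_left_mono of_nat_0_le_iff order_trans)
  qed
  also have "\<dots> = real m * (real m + 1) / 2 * Q"
    using double_gauss_sum_from_Suc_0[of m, where 'a = real] by (simp add: sum_distrib_right[symmetric])
  also have "\<dots> \<le> real (Suc m) ^ 2 / 2 * Q"
    using Q by (intro mult_right_mono) (auto simp: power2_eq_square algebra_simps)
  finally show ?thesis by (simp add: Q_def)
qed

lemma norm0sq_nonneg: "0 \<le> h \<Longrightarrow> 0 \<le> norm0sq h N v"
  unfolding norm0sq_def dinner_def by (intro sum_nonneg) auto

lemma Hh_lincomb: "Hh h (\<lambda>i. p * u i + q * w i) i = p * Hh h u i + q * Hh h w i"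
  by (cases "h = 0") (simp_all add: Hh_def dxx_def field_simps)

lemma Hh_eq_compact_average: "h \<noteq> 0 \<Longrightarrow> Hh h v i = (v (i - 1) + 10 * v i + v (i + 1)) / 12"
  by (simp add: Hh_def dxx_def field_simps)

context
  fixes h :: real and N :: nat and z :: "nat \<Rightarrow> real"
  assumes h_pos: "0 < h" and N_pos: "1 \<le> N" and z_0: "z 0 = 0" and z_N: "z N = 0"
begin

lemma dinner_dxx_Hh_le_grad:
  "dinner h N (dxx h z) (Hh h z) \<le> - 2/3 * (\<Sum>k = 1..N. (z k - z (k - 1))\<^sup>2) / h"
proof -
  obtain m where m: "N = Suc m" using N_pos by (cases N) auto
  define Q where "Q = (\<Sum>k = 1..N. (z k - z (k - 1))\<^sup>2)"
  define d2 where "d2 = (\<lambda>i. z (i + 1) - 2 * z i + z (i - 1))"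
  have "(\<Sum>i = 1..m. d2 i * z i) = - Q"
    using sum_second_diff_mult_eq[of z m, OF z_0] z_N by (simp add: d2_def Q_def m)
  moreover have "(\<Sum>i = 1..m. (d2 i)\<^sup>2) \<le> 4 * Q"
    using sum_second_diff_sq_le[of z m] zero_le_power2[of "z (Suc m) - z m"]
    unfolding d2_def Q_def m by linarith
  ultimately have "((\<Sum>i = 1..m. d2 i * z i) + (\<Sum>i = 1..m. (d2 i)\<^sup>2) / 12) / h \<le> - 2/3 * Q / h"
    using h_pos by (intro divide_right_mono) auto
  moreover have "dinner h N (dxx h z) (Hh h z) = (\<Sum>i = 1..m. (d2 i * z i + (d2 i)\<^sup>2 / 12) / h)"
    unfolding dinner_def m using h_pos
    by (intro sum.cong) (auto simp: Hh_def dxx_def d2_def power2_eq_square field_simps)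
  ultimately show ?thesis
    by (simp add: Q_def sum_divide_distrib[symmetric] sum.distrib)
qed

lemma norm0sq_Hh_le_grad:
  "norm0sq h N (Hh h z) \<le> h * real N ^ 2 / 2 * (\<Sum>k = 1..N. (z k - z (k - 1))\<^sup>2)"
proof -
  obtain m where m: "N = Suc m" using N_pos by (cases N) auto
  have "(\<Sum>i = 1..m. (Hh h z i)\<^sup>2) \<le> (\<Sum>i = 1..m. ((z (i - 1))\<^sup>2 + (z (i + 1))\<^sup>2 + 10 * (z i)\<^sup>2) / 12)"
    using compact_average_sq_le h_pos
    by (intro sum_mono) (simp add: Hh_eq_compact_average add.commute add.left_commute)
  also have "\<dots> = ((\<Sum>i = 1..m. (z (i - 1))\<^sup>2 + (z (i + 1))\<^sup>2) + 10 * (\<Sum>i = 1..m. (z i)\<^sup>2)) / 12"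
    by (simp add: sum_divide_distrib[symmetric] sum.distrib sum_distrib_left)
  also have "\<dots> \<le> (\<Sum>i = 1..m. (z i)\<^sup>2)"
  proof -
    have "(z (Suc m))\<^sup>2 = 0" using z_N m by simp
    then have "(\<Sum>i = 1..m. (z (i - 1))\<^sup>2 + (z (i + 1))\<^sup>2) \<le> 2 * (\<Sum>i = 1..m. (z i)\<^sup>2)"
      using sum_neighbour_sq_le[of z m, OF z_0] zero_le_power2[of "z m"] by linarith
    then show ?thesis by simp
  qed
  also have "\<dots> \<le> real N ^ 2 / 2 * (\<Sum>k = 1..N. (z k - z (k - 1))\<^sup>2)"
    using discrete_poincare[of z m, OF z_0] by (simp add: m)
  finally have "(\<Sum>i = 1..m. (Hh h z i)\<^sup>2) \<le> real N ^ 2 / 2 * (\<Sum>k = 1..N. (z k - z (k - 1))\<^sup>2)" .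
  then have "h * (\<Sum>i = 1..m. (Hh h z i)\<^sup>2) \<le> h * (real N ^ 2 / 2 * (\<Sum>k = 1..N. (z k - z (k - 1))\<^sup>2))"
    using h_pos by (intro mult_left_mono) auto
  moreover have "norm0sq h N (Hh h z) = h * (\<Sum>i = 1..m. (Hh h z i)\<^sup>2)"
    by (simp add: norm0sq_def dinner_def m power2_eq_square sum_distrib_left mult_ac)
  ultimately show ?thesis by (simp add: mult.assoc)
qed

lemma dinner_dxx_Hh_le:
  assumes l: "l = real N * h"
  shows "dinner h N (dxx h z) (Hh h z) \<le> - (4 / (3 * l\<^sup>2)) * norm0sq h N (Hh h z)"
proof -
  define Q where "Q = (\<Sum>k = 1..N. (z k - z (k - 1))\<^sup>2)"
  have "- 2/3 * Q / h = - (4 / (3 * l\<^sup>2)) * (h * real N ^ 2 / 2 * Q)"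
    using h_pos N_pos by (simp add: l power2_eq_square field_simps)
  also have "\<dots> \<le> - (4 / (3 * l\<^sup>2)) * norm0sq h N (Hh h z)"
    using mult_left_mono[OF norm0sq_Hh_le_grad, of "4 / (3 * l\<^sup>2)"] by (simp add: Q_def)
  finally show ?thesis using dinner_dxx_Hh_le_grad by (simp add: Q_def)
qed

end

section \<open>Stability of the scheme\<close>

lemma young_ineq: "0 < e \<Longrightarrow> p * (v :: real) \<le> e * v\<^sup>2 + p\<^sup>2 / (4 * e)"
proof -
  assume e: "0 < e"
  have "0 \<le> (2 * e * v - p)\<^sup>2" by simp
  then have "4 * e * (p * v) \<le> 4 * e * (e * v\<^sup>2 + p\<^sup>2 / (4 * e))"
    using e by (simp add: power2_eq_square algebra_simps)
  then show ?thesis using e by simp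
qed

lemma dinner_scheme_rhs_le:
  assumes h: "0 < h" and c1: "0 < c1" "c1 \<le> a" and d: "0 \<le> d" and \<beta>: "0 < \<beta>"
    and coercive: "dinner h N D V \<le> - \<beta> * norm0sq h N V"
  shows "dinner h N V (\<lambda>i. a * D i - d * V i + F i) \<le> norm0sq h N F / (4 * c1 * \<beta>)"
proof -
  define X where "X = norm0sq h N V"
  have X: "0 \<le> X" using norm0sq_nonneg h by (simp add: X_def)
  have "dinner h N V (\<lambda>i. a * D i - d * V i + F i) = a * dinner h N D V - d * X + dinner h N F V"
    by (simp add: X_def norm0sq_def dinner_def sum.distrib sum_subtractf sum_distrib_left algebra_simps)
  also have "a * dinner h N D V \<le> a * (- \<beta> * X)"
    using coercive c1 by (intro mult_left_mono) (auto simp: X_def)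
  also have "dinner h N F V \<le> c1 * \<beta> * X + norm0sq h N F / (4 * c1 * \<beta>)"
  proof -
    have "dinner h N F V \<le> (\<Sum>i = 1..N - 1. (c1 * \<beta> * (V i)\<^sup>2 + (F i)\<^sup>2 / (4 * c1 * \<beta>)) * h)"
      unfolding dinner_def using young_ineq[of "c1 * \<beta>"] c1 \<beta> h
      by (intro sum_mono mult_right_mono) (auto simp: mult.assoc)
    also have "\<dots> = (\<Sum>i = 1..N - 1. c1 * \<beta> * (V i * V i * h) + F i * F i * h / (4 * c1 * \<beta>))"
      by (intro sum.cong) (auto simp: power2_eq_square field_simps)
    finally show ?thesis
      by (simp add: X_def norm0sq_def dinner_def sum.distrib sum_distrib_left sum_divide_distrib)
  qed
  also have "c1 * \<beta> * X \<le> a * \<beta> * X" using c1 \<beta> X by (intro mult_right_mono) auto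
  finally show ?thesis using mult_nonneg_nonneg[OF d X] by (simp add: algebra_simps)
qed

lemma frac_deriv_eq_weighted_sum:
  "frac_deriv \<alpha> \<sigma> \<tau> j w
     = \<tau> powr (1 - \<alpha>) / Gamma (2 - \<alpha>) / \<tau> * (\<Sum>s = 0..j. coef_c \<alpha> \<sigma> j (j - s) * (w (Suc s) - w s))"
  by (simp add: frac_deriv_def sum_divide_distrib[symmetric] sum_distrib_left)

lemma scheme_energy_level_le:
  fixes y :: "nat \<Rightarrow> nat \<Rightarrow> real" and F :: "nat \<Rightarrow> real"
  assumes \<alpha>: "0 < \<alpha>" "\<alpha> < 1" and \<sigma>: "\<sigma> = 1 - \<alpha> / 2"
    and h: "0 < h" and N: "1 \<le> N" and l: "l = real N * h" and \<tau>: "0 < \<tau>"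
    and a: "0 < c1" "c1 \<le> a" and d: "0 \<le> d"
    and bdry: "y j 0 = 0" "y j N = 0" "y (Suc j) 0 = 0" "y (Suc j) N = 0"
    and scheme: "\<And>i. 1 \<le> i \<Longrightarrow> i \<le> N - 1 \<Longrightarrow> frac_deriv \<alpha> \<sigma> \<tau> j (\<lambda>s. Hh h (y s) i)
        = a * dxx h (\<lambda>i'. \<sigma> * y (Suc j) i' + (1 - \<sigma>) * y j i') i
          - d * Hh h (\<lambda>i'. \<sigma> * y (Suc j) i' + (1 - \<sigma>) * y j i') i + Hh h F i"
  shows "(\<Sum>s = 0..j. coef_c \<alpha> \<sigma> j (j - s)
            * (norm0sq h N (Hh h (y (Suc s))) - norm0sq h N (Hh h (y s))))
       \<le> 3 * l\<^sup>2 * \<tau> powr \<alpha> * Gamma (2 - \<alpha>) / (8 * c1) * norm0sq h N (Hh h F)"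
proof -
  define Y where "Y = (\<lambda>i'. \<sigma> * y (Suc j) i' + (1 - \<sigma>) * y j i')"
  define W where "W = (\<lambda>s. Hh h (y s))"
  define c where "c = (\<lambda>s. coef_c \<alpha> \<sigma> j (j - s))"
  define K where "K = \<tau> powr (1 - \<alpha>) / Gamma (2 - \<alpha>) / \<tau>"
  define \<beta> where "\<beta> = 4 / (3 * l\<^sup>2)"
  define D where "D = (\<lambda>i. \<Sum>s = 0..j. c s * (W (Suc s) i - W s i))"
  have K: "0 < K" using \<tau> \<alpha> by (simp add: K_def)
  have \<beta>: "0 < \<beta>" using h N l by (simp add: \<beta>_def)
  have HhY: "Hh h Y i = \<sigma> * W (Suc j) i + (1 - \<sigma>) * W j i" for i
    by (simp add: Y_def W_def Hh_lincomb)
  have energy: "(\<Sum>s = 0..j. c s * ((W (Suc s) i)\<^sup>2 - (W s i)\<^sup>2)) \<le> 2 * (Hh h Y i * D i)" for i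
    using coef_c_energy_ineq[OF \<alpha> \<sigma>, of j "\<lambda>s. W s i"] by (simp add: HhY c_def D_def)
  have rhs: "K * D i = a * dxx h Y i - d * Hh h Y i + Hh h F i" if "i \<in> {1..N - 1}" for i
    using scheme[of i] that by (simp add: frac_deriv_eq_weighted_sum K_def D_def c_def W_def Y_def)
  have inner: "dinner h N (Hh h Y) (\<lambda>i. K * D i) \<le> norm0sq h N (Hh h F) / (4 * c1 * \<beta>)"
  proof -
    have "dinner h N (Hh h Y) (\<lambda>i. K * D i)
        = dinner h N (Hh h Y) (\<lambda>i. a * dxx h Y i - d * Hh h Y i + Hh h F i)"
      unfolding dinner_def using rhs by (intro sum.cong) auto
    also have "\<dots> \<le> norm0sq h N (Hh h F) / (4 * c1 * \<beta>)"
    proof (rule dinner_scheme_rhs_le[OF h a d \<beta>])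
      have "Y 0 = 0" "Y N = 0" using bdry by (simp_all add: Y_def)
      then show "dinner h N (dxx h Y) (Hh h Y) \<le> - \<beta> * norm0sq h N (Hh h Y)"
        unfolding \<beta>_def using dinner_dxx_Hh_le[OF h N] l by simp
    qed
    finally show ?thesis .
  qed
  have "(\<Sum>s = 0..j. c s * (norm0sq h N (W (Suc s)) - norm0sq h N (W s)))
      = (\<Sum>i = 1..N - 1. (\<Sum>s = 0..j. c s * ((W (Suc s) i)\<^sup>2 - (W s i)\<^sup>2)) * h)"
    by (simp add: norm0sq_def dinner_def sum_subtractf[symmetric] sum_distrib_left sum_distrib_right
        power2_eq_square algebra_simps sum.swap[of _ "{0..j}"])
  also have "\<dots> \<le> (\<Sum>i = 1..N - 1. 2 * (Hh h Y i * D i) * h)"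
    using energy h by (intro sum_mono mult_right_mono) auto
  also have "\<dots> = 2 / K * dinner h N (Hh h Y) (\<lambda>i. K * D i)"
    using K by (simp add: dinner_def sum_distrib_left algebra_simps)
  also have "\<dots> \<le> 2 / K * (norm0sq h N (Hh h F) / (4 * c1 * \<beta>))"
    using inner K by (intro mult_left_mono) auto
  also have "2 / K * (norm0sq h N (Hh h F) / (4 * c1 * \<beta>))
      = 3 * l\<^sup>2 * \<tau> powr \<alpha> * Gamma (2 - \<alpha>) / (8 * c1) * norm0sq h N (Hh h F)"
    using \<tau> \<alpha> a h N l by (simp add: K_def \<beta>_def powr_diff field_simps)
  finally show ?thesis by (simp add: c_def W_def)
qed

lemma stability_constant_le:
  fixes \<alpha> \<tau> R T l c1 :: real
  assumes \<alpha>: "0 < \<alpha>" "\<alpha> < 1" and \<tau>: "0 < \<tau>" and R: "0 < R" "\<tau> * R \<le> T" and c1: "0 < c1"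
  shows "3 * l\<^sup>2 * \<tau> powr \<alpha> * Gamma (2 - \<alpha>) / (8 * c1) / ((1 - \<alpha>) / 2 * R powr (- \<alpha>))
      \<le> l\<^sup>2 * T powr \<alpha> * Gamma (1 - \<alpha>) / c1"
proof -
  have "1 - \<alpha> \<notin> \<int>\<^sub>\<le>\<^sub>0" using \<alpha> by auto
  then have Gamma_2: "Gamma (2 - \<alpha>) = (1 - \<alpha>) * Gamma (1 - \<alpha>)"
    using Gamma_plus1[of "1 - \<alpha>"] by simp
  define g where "g = l\<^sup>2 * Gamma (1 - \<alpha>) / c1"
  have g: "0 \<le> g" using \<alpha> c1 by (simp add: g_def)
  have "3 * l\<^sup>2 * \<tau> powr \<alpha> * Gamma (2 - \<alpha>) / (8 * c1) / ((1 - \<alpha>) / 2 * R powr (- \<alpha>))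
      = 3/4 * (g * (\<tau> * R) powr \<alpha>)"
    using \<alpha> \<tau> R c1 by (simp add: g_def Gamma_2 powr_minus_divide powr_mult field_simps)
  also have "\<dots> \<le> g * (\<tau> * R) powr \<alpha>" using g by simp
  also have "\<dots> \<le> g * T powr \<alpha>"
    using \<tau> R \<alpha> g by (intro mult_left_mono powr_mono2) auto
  finally show ?thesis by (simp add: g_def mult_ac)
qed

lemma fractional_energy_bound:
  fixes E :: "nat \<Rightarrow> real"
  assumes \<alpha>: "0 < \<alpha>" "\<alpha> < 1" and \<sigma>: "\<sigma> = 1 - \<alpha> / 2"
    and \<tau>: "0 < \<tau>" and M: "1 \<le> M" and T: "T = real M * \<tau>" and c1: "0 < c1" and P: "0 \<le> P"
    and level: "\<And>j. j < M \<Longrightarrow> (\<Sum>s = 0..j. coef_c \<alpha> \<sigma> j (j - s) * (E (Suc s) - E s))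
        \<le> 3 * l\<^sup>2 * \<tau> powr \<alpha> * Gamma (2 - \<alpha>) / (8 * c1) * P"
    and j: "j \<le> M"
  shows "E j \<le> E 0 + l\<^sup>2 * T powr \<alpha> * Gamma (1 - \<alpha>) / c1 * P"
proof -
  have \<sigma>_range: "1 - \<alpha> \<le> \<sigma>" "\<sigma> \<le> 1" using \<alpha> \<sigma> by auto
  define C where "C = 3 * l\<^sup>2 * \<tau> powr \<alpha> * Gamma (2 - \<alpha>) / (8 * c1)"
  define R where "R = real (M - 1) + \<sigma>"
  define \<mu> where "\<mu> = (1 - \<alpha>) / 2 * R powr (- \<alpha>)"
  have R: "0 < R" "\<tau> * R \<le> T" using \<sigma> \<alpha> \<tau> M by (auto simp: R_def T of_nat_diff)
  have "E j \<le> E 0 + C * P / \<mu>"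
  proof (rule fractional_gronwall[OF _ _ _ _ level[unfolded C_def[symmetric]] j])
    show "0 < \<mu>" using \<alpha> R by (simp add: \<mu>_def)
    show "0 \<le> C * P" using \<alpha> \<tau> c1 P by (simp add: C_def)
    show "coef_c \<alpha> \<sigma> j (Suc s) \<le> coef_c \<alpha> \<sigma> j s" if "s < j" for j s
      using coef_c_antimono[OF \<alpha> \<sigma>_range that] .
    show "\<mu> \<le> coef_c \<alpha> \<sigma> j j" if "j < M" for j
    proof -
      have "R powr (- \<alpha>) \<le> (real j + \<sigma>) powr (- \<alpha>)"
        using that \<sigma>_range \<alpha> by (intro powr_mono2') (auto simp: R_def)
      then have "\<mu> \<le> (1 - \<alpha>) / 2 * (real j + \<sigma>) powr (- \<alpha>)"
        using \<alpha> unfolding \<mu>_def by (intro mult_left_mono) auto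
      then show ?thesis using coef_c_diag_ge[OF \<alpha> \<sigma>_range, of j] by linarith
    qed
  qed
  also have "C * P / \<mu> = C / \<mu> * P" by simp
  also have "\<dots> \<le> l\<^sup>2 * T powr \<alpha> * Gamma (1 - \<alpha>) / c1 * P"
    unfolding C_def \<mu>_def by (rule mult_right_mono[OF stability_constant_le[OF \<alpha> \<tau> R c1] P])
  finally show ?thesis by simp
qed

theorem theorem4:
  fixes \<alpha> \<sigma> l T h \<tau> c1 :: real
    and N M :: nat
    and k q :: "real \<Rightarrow> real"
    and f :: "real \<Rightarrow> real \<Rightarrow> real"
    and u0 :: "real \<Rightarrow> real"
    and y :: "nat \<Rightarrow> nat \<Rightarrow> real"
  assumes "0 < \<alpha>" "\<alpha> < 1" "\<sigma> = 1 - \<alpha> / 2"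
    and "0 < l" "0 < T" "1 \<le> N" "1 \<le> M"
    and h_def: "h = l / real N" and tau_def: "\<tau> = T / real M"
    and "0 < c1"
    and "continuous_on {0..T} k" "\<forall>t\<in>{0..T}. c1 \<le> k t"
    and "continuous_on {0..T} q" "\<forall>t\<in>{0..T}. 0 \<le> q t"
    and "continuous_on ({0..l} \<times> {0..T}) (\<lambda>(x, t). f x t)"
    and scheme: "\<forall>j < M. \<forall>i. 1 \<le> i \<and> i \<le> N - 1 \<longrightarrow>
        frac_deriv \<alpha> \<sigma> \<tau> j (\<lambda>s. Hh h (y s) i)
          = k ((real j + \<sigma>) * \<tau>) * dxx h (\<lambda>i'. \<sigma> * y (j + 1) i' + (1 - \<sigma>) * y j i') i
            - q ((real j + \<sigma>) * \<tau>) * Hh h (\<lambda>i'. \<sigma> * y (j + 1) i' + (1 - \<sigma>) * y j i') i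
            + Hh h (\<lambda>i'. f (real i' * h) ((real j + \<sigma>) * \<tau>)) i"
    and bdry: "\<forall>j \<le> M. y j 0 = 0 \<and> y j N = 0"
    and init: "\<forall>i. 1 \<le> i \<and> i \<le> N - 1 \<longrightarrow> y 0 i = u0 (real i * h)"
  shows "\<forall>j < M.
     norm0sq h N (Hh h (y (j + 1)))
       \<le> norm0sq h N (Hh h (y 0))
         + l ^ 2 * T powr \<alpha> * Gamma (1 - \<alpha>) / c1 *
           Max ((\<lambda>j'. norm0sq h N (Hh h (\<lambda>i. f (real i * h) ((real j' - 1 + \<sigma>) * \<tau>))))
                  ` {1..M})"
proof -
  note \<alpha> = assms(1,2) and \<sigma> = assms(3) and c1 = assms(10)
  have h: "0 < h" and l: "l = real N * h" using assms(4,6) h_def by simp_all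
  have \<tau>: "0 < \<tau>" and T: "T = real M * \<tau>" using assms(5,7) tau_def by simp_all
  define source where "source j' = norm0sq h N (Hh h (\<lambda>i. f (real i * h) ((real j' - 1 + \<sigma>) * \<tau>)))"
    for j' :: nat
  define P where "P = Max (source ` {1..M})"
  have source_le: "source (Suc j) \<le> P" if "j < M" for j
    using that by (auto simp: P_def intro: Max_ge)
  have "0 \<le> source 1" using norm0sq_nonneg h by (simp add: source_def)
  then have P: "0 \<le> P" using source_le[of 0] assms(7) by simp
  have level: "(\<Sum>s = 0..j. coef_c \<alpha> \<sigma> j (j - s)
      * (norm0sq h N (Hh h (y (Suc s))) - norm0sq h N (Hh h (y s))))
      \<le> 3 * l\<^sup>2 * \<tau> powr \<alpha> * Gamma (2 - \<alpha>) / (8 * c1) * P" if j: "j < M" for j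
  proof -
    have "0 \<le> real j + \<sigma>" "real j + \<sigma> \<le> real M"
      using j \<alpha> \<sigma> of_nat_mono[of "Suc j" M] by auto
    then have "(real j + \<sigma>) * \<tau> \<in> {0..T}" using \<tau> by (simp add: T)
    then have "(\<Sum>s = 0..j. coef_c \<alpha> \<sigma> j (j - s)
        * (norm0sq h N (Hh h (y (Suc s))) - norm0sq h N (Hh h (y s))))
        \<le> 3 * l\<^sup>2 * \<tau> powr \<alpha> * Gamma (2 - \<alpha>) / (8 * c1) * source (Suc j)"
      unfolding source_def using j scheme bdry assms(12,14)
      by (intro scheme_energy_level_le[OF \<alpha> \<sigma> h assms(6) l \<tau> c1]) auto
    also have "\<dots> \<le> 3 * l\<^sup>2 * \<tau> powr \<alpha> * Gamma (2 - \<alpha>) / (8 * c1) * P"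
      using source_le[OF j] \<alpha> \<tau> c1 by (intro mult_left_mono) auto
    finally show ?thesis .
  qed
  have "Max ((\<lambda>j'. norm0sq h N (Hh h (\<lambda>i. f (real i * h) ((real j' - 1 + \<sigma>) * \<tau>)))) ` {1..M}) = P"
    by (simp add: P_def source_def)
  then show ?thesis
    using fractional_energy_bound[OF \<alpha> \<sigma> \<tau> assms(7) T c1 P level] by simp
qed

end
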